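(* Let $\mathcal{A}\in\mathbb{R}^{n_1\times\cdots\times n_d}$ ($d\ge 2$) and $p\in\{1,\dots,d\}$, and let $\mathcal{G}^{(1)},\dots,\mathcal{G}^{(d)}$ be the cores output by the sparse TT conversion procedure described below applied to $(\mathcal{A},p)$. Then $\mathbf{L}(\mathcal{G}^{(k)})$ has orthonormal columns for every $k<p$, and $\mathbf{R}(\mathcal{G}^{(k)})^T$ has orthonormal columns for every $k>p$.
   Context: TT format: cores $\mathcal{G}^{(k)}\in\mathbb{R}^{r_{k-1}\times n_k\times r_k}$, $r_0=r_d=1$, represent the tensor with entries $\mathcal{G}^{(1)}(:,i_1,:)\cdots\mathcal{G}^{(d)}(:,i_d,:)$. For a core $\mathcal{G}\in\mathbb{R}^{a\times n\times b}$: $\mathbf{L}(\mathcal{G})\in\mathbb{R}^{an\times b}$, $\mathbf{L}(\mathcal{G})_{(i-1)n+j,\,l}=\mathcal{G}(i,j,l)$; $\mathbf{R}(\mathcal{G})\in\mathbb{R}^{a\times nb}$, $\mathbf{R}(\mathcal{G})_{i,\,(j-1)b+l}=\mathcal{G}(i,j,l)$. A $p$-fiber of $\mathcal{A}$ is a vector $\mathcal{A}(i_1,\dots,i_{p-1},:,i_{p+1},\dots,i_d)\in\mathbb{R}^{n_p}$. $\operatorname{Depar}$: given $\mathbf{M}\in\mathbb{R}^{a\times b}$, process columns $j=1,\dots,b$ in order, keeping an ordered list $K$ of kept columns: if $\mathbf{M}_{:,j}=cK_i$ for some kept $K_i$ and scalar $c$ (first such $i$), set $T_{i,j}=c$; otherwise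 append $\mathbf{M}_{:,j}$ to $K$ and set $T_{|K|,j}=1$; other entries of $\mathbf{T}$ are zero. Output $\mathbf{N}=[K_1\cdots K_\beta]$, $\mathbf{T}\in\mathbb{R}^{\beta\times b}$. Sparse TT conversion procedure on $(\mathcal{A},p)$: enumerate the nonzero $p$-fibers as $j=1,\dots,R$, the $j$-th having fixed indices $(i^{(j)}_1,\dots,i^{(j)}_{p-1},i^{(j)}_{p+1},\dots,i^{(j)}_d)$ and value $\mathbf{v}_j\in\mathbb{R}^{n_p}$. Initialize a TT with ranks $r_0=r_d=1$, $r_k=R$ otherwise: for $k\neq p$, $\mathcal{G}^{(k)}(a,i,b)=1$ if $i=i^{(j)}_k$, where $j=b$ if $k=1$, $j=a$ if $k=d$, and $a=b=j$ is required if $1<k<d$; all other entries $0$. For $k=p$, $\mathcal{G}^{(p)}(a,i,b)=\mathbf{v}_j(i)$ with $j$ determined by the same rule, other entries $0$. Then set $\tilde r_0=1$; for $k=1,\dots,p-1$: $(\mathbf{N},\mathbf{T})=\operatorname{Depar}(\mathbf{L}(\mathcal{G}^{(k)}))$, $\mathbf{N}\in\mathbb{R}^{\tilde r_{k-1}n_k\times\tilde r_k}$; replace $\mathcal{G}^{(k)}$ by the core whose $\mathbf{L}$-unfolding is $\mathbf{N}$; replace each slice $\mathcal{G}^{(k+1)}(:,i,:)$ by $\mathbf{T}\mathcal{G}^{(k+1)}(:,i,:)$. Then set $\tilde r_d=1$; for $k=d,\dots,p+1$: $(\mathbf{N},\mathbf{T})=\operatorname{Depar}(\mathbf{R}(\mathcal{G}^{(k)})^T)$,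 $\mathbf{N}\in\mathbb{R}^{n_k\tilde r_k\times\tilde r_{k-1}}$; replace $\mathcal{G}^{(k)}$ by the core whose $\mathbf{R}$-unfolding is $\mathbf{N}^T$; replace each slice $\mathcal{G}^{(k-1)}(:,i,:)$ by $\mathcal{G}^{(k-1)}(:,i,:)\mathbf{T}^T$. Output the resulting cores. *)

theory Defs
  imports "Jordan_Normal_Form.Matrix"
begin

text \<open>Conventions: all indices are 0-based. A tensor of size n_1 x ... x n_d is
  given by its list of mode sizes ns (length d) and an entry function
  A :: nat list => real, evaluated on index lists xs with length xs = d and
  xs!k < ns!k. The paper's mode p (1-based) is p+1 here.
  A TT core G in R^(a x n x b) is a tuple (a, n, b, f) with G(x,i,y) = f x i y.\<close>

type_synonym core = "nat \<times> nat \<times> nat \<times> (nat \<Rightarrow> nat \<Rightarrow> nat \<Rightarrow> real)"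

fun core_L :: "core \<Rightarrow> real mat" where
  "core_L (a, n, b, f) = mat (a * n) b (\<lambda>(r, l). f (r div n) (r mod n) l)"

fun core_R :: "core \<Rightarrow> real mat" where
  "core_R (a, n, b, f) = mat a (n * b) (\<lambda>(x, c). f x (c div b) (c mod b))"

fun core_slice :: "core \<Rightarrow> nat \<Rightarrow> real mat" where
  "core_slice (a, n, b, f) i = mat a b (\<lambda>(x, y). f x i y)"

definition core_of_L :: "nat \<Rightarrow> nat \<Rightarrow> real mat \<Rightarrow> core" where
  "core_of_L a n N = (a, n, dim_col N, \<lambda>x i y. N $$ (x * n + i, y))"

definition core_of_R :: "nat \<Rightarrow> nat \<Rightarrow> real mat \<Rightarrow> core" where
  "core_of_R n b M = (dim_row M, n, b, \<lambda>x i y. M $$ (x, i * b + y))"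

fun core_lmult :: "real mat \<Rightarrow> core \<Rightarrow> core" where
  "core_lmult T (a, n, b, f) =
     (dim_row T, n, b, \<lambda>x i y. (T * core_slice (a, n, b, f) i) $$ (x, y))"

fun core_rmult :: "core \<Rightarrow> real mat \<Rightarrow> core" where
  "core_rmult (a, n, b, f) S =
     (a, n, dim_col S, \<lambda>x i y. (core_slice (a, n, b, f) i * S) $$ (x, y))"

fun depar_cols :: "real vec list \<Rightarrow> real vec list \<Rightarrow> real vec list \<times> (nat \<times> real) list" where
  "depar_cols K [] = (K, [])"
| "depar_cols K (v # vs) =
     (case find (\<lambda>i. \<exists>c. v = c \<cdot>\<^sub>v (K ! i)) [0..<length K] of
        Some i \<Rightarrow> (let (K', as) = depar_cols K vs
                   in (K', (i, SOME c. v = c \<cdot>\<^sub>v (K ! i)) # as))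
      | None \<Rightarrow> (let (K', as) = depar_cols (K @ [v]) vs
                 in (K', (length K, 1) # as)))"

definition depar :: "real mat \<Rightarrow> real mat \<times> real mat" where
  "depar M = (let (K, as) = depar_cols [] (cols M) in
     (mat_of_cols (dim_row M) K,
      mat (length K) (dim_col M) (\<lambda>(i, j). if fst (as ! j) = i then snd (as ! j) else 0)))"

text \<open>Enumeration of nonzero p-fibers: each entry is a full index list whose p-th
  entry is a placeholder 0; the list is duplicate-free and lists exactly the
  fixed-index tuples whose fiber is nonzero.\<close>
definition nonzero_fiber_enum ::
  "nat list \<Rightarrow> (nat list \<Rightarrow> real) \<Rightarrow> nat \<Rightarrow> nat list list \<Rightarrow> bool" where
  "nonzero_fiber_enum ns A p fs \<longleftrightarrow> distinct fs \<and>
     set fs = {xs. length xs = length ns \<and> xs ! p = 0 \<and>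
                   (\<forall>k<length ns. k \<noteq> p \<longrightarrow> xs ! k < ns ! k) \<and>
                   (\<exists>i<ns ! p. A (xs[p := i]) \<noteq> 0)}"

definition init_core :: "nat list \<Rightarrow> (nat list \<Rightarrow> real) \<Rightarrow> nat \<Rightarrow> nat list list \<Rightarrow> nat \<Rightarrow> core" where
  "init_core ns A p fs k =
    (let d = length ns; R = length fs;
         ra = (if k = 0 then 1 else R);
         rb = (if k = d - 1 then 1 else R);
         val = (\<lambda>j i. if k = p then A ((fs ! j)[p := i])
                       else (if i = fs ! j ! k then 1 else 0))
     in (ra, ns ! k, rb, \<lambda>a i b.
           if a < ra \<and> i < ns ! k \<and> b < rb then
             (if k = 0 then val b i
              else if k = d - 1 then val a i
              else if a = b then val a i else 0)
           else 0))"

definition left_step :: "nat \<Rightarrow> core list \<Rightarrow> core list" where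
  "left_step k Gs =
    (case Gs ! k of (a, n, b, f) \<Rightarrow>
      (let (N, T) = depar (core_L (Gs ! k))
       in Gs[k := core_of_L a n N, Suc k := core_lmult T (Gs ! Suc k)]))"

definition right_step :: "nat \<Rightarrow> core list \<Rightarrow> core list" where
  "right_step k Gs =
    (case Gs ! k of (a, n, b, f) \<Rightarrow>
      (let (N, T) = depar (transpose_mat (core_R (Gs ! k)))
       in Gs[k := core_of_R n b (transpose_mat N),
             k - 1 := core_rmult (Gs ! (k - 1)) (transpose_mat T)]))"

definition sparse_tt :: "nat list \<Rightarrow> (nat list \<Rightarrow> real) \<Rightarrow> nat \<Rightarrow> nat list list \<Rightarrow> core list" where
  "sparse_tt ns A p fs =
    fold right_step (rev [Suc p..<length ns])
      (fold left_step [0..<p] (map (init_core ns A p fs) [0..<length ns]))"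

definition orthonormal_cols :: "real mat \<Rightarrow> bool" where
  "orthonormal_cols M \<longleftrightarrow>
     (\<forall>i<dim_col M. \<forall>j<dim_col M. col M i \<bullet> col M j = (if i = j then 1 else 0))"

end

theory Submission
  imports Defs
begin

(* Every initial core other than the p-th is a 0/1 core whose relevant unfolding (L for the
   cores left of p, R^T for those right of p) has standard basis vectors as columns. Depar keeps
   distinct standard basis vectors of such a matrix, which are orthonormal, and its coefficient
   matrix T again has standard basis columns. The core that absorbs T is still an initial interior
   core, diagonal in its rank indices, so its updated unfolding is the Khatri-Rao product of T
   with a selection matrix and again has standard basis columns: the property travels along
   both sweeps. *)

section \<open>Matrices whose columns are standard basis vectors\<close>

definition unit_cols :: "real mat \<Rightarrow> bool" where
  "unit_cols M \<longleftrightarrow> set (cols M) \<subseteq> unit_vec (dim_row M) ` {..<dim_row M}"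

lemma unit_cols_iff:
  "unit_cols M \<longleftrightarrow>
     (\<forall>l<dim_col M. \<exists>g<dim_row M. \<forall>r<dim_row M. M $$ (r, l) = (if r = g then 1 else 0))"
proof -
  have col: "col M l = unit_vec (dim_row M) g \<longleftrightarrow>
      (\<forall>r<dim_row M. M $$ (r, l) = (if r = g then 1 else 0))"
    if "l < dim_col M" "g < dim_row M" for l g
    using that by (auto simp: vec_eq_iff)
  have "unit_cols M \<longleftrightarrow> (\<forall>l<dim_col M. \<exists>g<dim_row M. col M l = unit_vec (dim_row M) g)"
    by (auto simp: unit_cols_def cols_def image_subset_iff image_iff)
  also have "\<dots> \<longleftrightarrow>
      (\<forall>l<dim_col M. \<exists>g<dim_row M. \<forall>r<dim_row M. M $$ (r, l) = (if r = g then 1 else 0))"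
    using col by blast
  finally show ?thesis .
qed

lemma unit_vec_eq_smult_unit_vec_iff:
  assumes "a < m" "b < m"
  shows "unit_vec m a = c \<cdot>\<^sub>v (unit_vec m b :: real vec) \<longleftrightarrow> a = b \<and> c = 1"
proof
  assume "unit_vec m a = c \<cdot>\<^sub>v (unit_vec m b :: real vec)"
  then have "unit_vec m a $ a = (c \<cdot>\<^sub>v (unit_vec m b :: real vec)) $ a"
    by simp
  then show "a = b \<and> c = 1"
    using assms by (simp split: if_splits)
qed simp

lemma orthonormal_cols_mat_of_cols:
  assumes "set K \<subseteq> unit_vec m ` {..<m}" "distinct K"
  shows "orthonormal_cols (mat_of_cols m K)"
  unfolding orthonormal_cols_def
proof (intro allI impI)
  fix i j
  assume "i < dim_col (mat_of_cols m K)" "j < dim_col (mat_of_cols m K)"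
  then have ij: "i < length K" "j < length K"
    by simp_all
  then have "K ! i \<in> unit_vec m ` {..<m}" "K ! j \<in> unit_vec m ` {..<m}"
    using assms(1) by auto
  then obtain a b where ab: "a < m" "b < m" "K ! i = unit_vec m a" "K ! j = unit_vec m b"
    by blast
  have "a = b \<longleftrightarrow> i = j"
    using ab ij assms(2) by (metis nth_eq_iff_index_eq unit_vec_eq)
  then show "col (mat_of_cols m K) i \<bullet> col (mat_of_cols m K) j = (if i = j then 1 else 0)"
    using ij ab by auto
qed

section \<open>Depar on such matrices\<close>

lemma depar_cols_unit_vecs:
  assumes "set K \<union> set vs \<subseteq> unit_vec m ` {..<m}" "distinct K" "depar_cols K vs = (K', as)"
  shows "set K' \<subseteq> unit_vec m ` {..<m} \<and> distinct K' \<and> length K \<le> length K' \<and>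
    length as = length vs \<and> (\<forall>(i, c) \<in> set as. i < length K' \<and> c = 1)"
  using assms
proof (induction K vs arbitrary: K' as rule: depar_cols.induct)
  case (1 K)
  then show ?case
    by auto
next
  case (2 K v vs)
  show ?case
  proof (cases "find (\<lambda>i. \<exists>c. v = c \<cdot>\<^sub>v (K ! i)) [0..<length K]")
    case None
    obtain K'' as' where r: "depar_cols (K @ [v]) vs = (K'', as')"
      by fastforce
    have "v \<notin> set K"
    proof
      assume "v \<in> set K"
      then obtain i where "i < length K" "K ! i = v"
        by (auto simp: in_set_conv_nth)
      then have "i \<in> set [0..<length K] \<and> (\<exists>c. v = c \<cdot>\<^sub>v (K ! i))"
        by (auto intro: exI[of _ 1])
      then show False
        using None unfolding find_None_iff by blast
    qed
    then have IH: "set K'' \<subseteq> unit_vec m ` {..<m} \<and> distinct K'' \<and>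
        length (K @ [v]) \<le> length K'' \<and> length as' = length vs \<and>
        (\<forall>(i, c) \<in> set as'. i < length K'' \<and> c = 1)"
      using "2.IH"(1)[OF None _ _ r] "2.prems"(1,2) by auto
    have "K' = K''" "as = (length K, 1) # as'"
      using "2.prems"(3) None r by auto
    then show ?thesis
      using IH by simp
  next
    case (Some i)
    then have i: "i < length K" and "\<exists>c. v = c \<cdot>\<^sub>v (K ! i)"
      by (auto simp: find_Some_iff)
    moreover have "v \<in> unit_vec m ` {..<m}" "K ! i \<in> unit_vec m ` {..<m}"
      using "2.prems"(1) i by auto
    ultimately have coeff: "(SOME c. v = c \<cdot>\<^sub>v (K ! i)) = 1"
      using unit_vec_eq_smult_unit_vec_iff by auto
    obtain K'' as' where r: "depar_cols K vs = (K'', as')"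
      by fastforce
    then have IH: "set K'' \<subseteq> unit_vec m ` {..<m} \<and> distinct K'' \<and> length K \<le> length K'' \<and>
        length as' = length vs \<and> (\<forall>(i, c) \<in> set as'. i < length K'' \<and> c = 1)"
      using "2.IH"(2)[OF Some _ _ r] "2.prems"(1,2) by auto
    have "K' = K''" "as = (i, 1) # as'"
      using "2.prems"(3) Some r coeff by auto
    then show ?thesis
      using IH i by simp
  qed
qed

lemma dim_row_fst_depar: "dim_row (fst (depar M)) = dim_row M"
  by (simp add: depar_def split: prod.split)

lemma dim_col_snd_depar: "dim_col (snd (depar M)) = dim_col M"
  by (simp add: depar_def split: prod.split)

lemma depar_unit_cols:
  assumes "unit_cols M"
  shows "orthonormal_cols (fst (depar M))" "unit_cols (snd (depar M))"
proof -
  obtain K as where r: "depar_cols [] (cols M) = (K, as)"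
    by fastforce
  then have K: "set K \<subseteq> unit_vec (dim_row M) ` {..<dim_row M} \<and> distinct K \<and>
      length as = dim_col M \<and> (\<forall>(i, c) \<in> set as. i < length K \<and> c = 1)"
    using assms depar_cols_unit_vecs[of "[]" "cols M" "dim_row M" K as]
    by (simp add: unit_cols_def)
  have depar: "depar M = (mat_of_cols (dim_row M) K,
      mat (length K) (dim_col M) (\<lambda>(i, j). if fst (as ! j) = i then snd (as ! j) else 0))"
    using r by (simp add: depar_def)
  show "orthonormal_cols (fst (depar M))"
    using K by (simp add: depar orthonormal_cols_mat_of_cols)
  have "fst (as ! l) < length K \<and> snd (as ! l) = 1" if "l < dim_col M" for l
    using K that nth_mem[of l as] by fastforce
  then show "unit_cols (snd (depar M))"
    unfolding unit_cols_iff depar by auto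
qed

section \<open>Khatri-Rao products and diagonal cores\<close>

lemma mult_add_less_mult:
  assumes "g < m" "j < n"
  shows "g * n + j < m * (n::nat)"
proof -
  have "g * n + j < Suc g * n"
    using assms(2) by simp
  also have "\<dots> \<le> m * n"
    using assms(1) by (intro mult_right_mono) auto
  finally show ?thesis .
qed

lemma div_mod_eq_iff: "j < n \<Longrightarrow> r div n = g \<and> r mod n = j \<longleftrightarrow> r = g * n + (j::nat)"
  by auto

definition khatri_rao :: "real mat \<Rightarrow> real mat \<Rightarrow> real mat" where
  "khatri_rao A B = mat (dim_row A * dim_row B) (dim_col A)
     (\<lambda>(r, l). A $$ (r div dim_row B, l) * B $$ (r mod dim_row B, l))"

lemma dim_khatri_rao [simp]:
  "dim_row (khatri_rao A B) = dim_row A * dim_row B" "dim_col (khatri_rao A B) = dim_col A"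
  by (simp_all add: khatri_rao_def)

lemma unit_cols_khatri_rao:
  assumes "unit_cols A" "unit_cols B" "dim_col A = dim_col B"
  shows "unit_cols (khatri_rao A B)"
  unfolding unit_cols_iff
proof (intro allI impI)
  fix l
  assume "l < dim_col (khatri_rao A B)"
  then have "l < dim_col A" "l < dim_col B"
    using assms(3) by (simp_all add: khatri_rao_def)
  obtain a where a: "a < dim_row A" "\<forall>x<dim_row A. A $$ (x, l) = (if x = a then 1 else 0)"
    using assms(1) \<open>l < dim_col A\<close> unfolding unit_cols_iff by blast
  obtain b where b: "b < dim_row B" "\<forall>y<dim_row B. B $$ (y, l) = (if y = b then 1 else 0)"
    using assms(2) \<open>l < dim_col B\<close> unfolding unit_cols_iff by blast
  have "khatri_rao A B $$ (r, l) = (if r = a * dim_row B + b then 1 else 0)"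
    if r: "r < dim_row A * dim_row B" for r
  proof -
    have "0 < dim_row B"
      using r by (cases "dim_row B") auto
    then have "r div dim_row B < dim_row A" "r mod dim_row B < dim_row B"
      using r by (simp_all add: less_mult_imp_div_less)
    then have "khatri_rao A B $$ (r, l) =
        (if r div dim_row B = a \<and> r mod dim_row B = b then 1 else 0)"
      using r a b \<open>l < dim_col A\<close> by (simp add: khatri_rao_def)
    then show ?thesis
      using div_mod_eq_iff[OF b(1)] by simp
  qed
  moreover have "a * dim_row B + b < dim_row (khatri_rao A B)"
    using mult_add_less_mult[OF a(1) b(1)] by (simp add: khatri_rao_def)
  ultimately show "\<exists>g<dim_row (khatri_rao A B). \<forall>r<dim_row (khatri_rao A B).
      khatri_rao A B $$ (r, l) = (if r = g then 1 else 0)"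
    by (auto simp: khatri_rao_def)
qed

definition selection_mat :: "nat \<Rightarrow> nat \<Rightarrow> (nat \<Rightarrow> nat) \<Rightarrow> real mat" where
  "selection_mat n R h = mat n R (\<lambda>(i, l). if i = h l then 1 else 0)"

lemma dim_selection_mat [simp]:
  "dim_row (selection_mat n R h) = n" "dim_col (selection_mat n R h) = R"
  by (simp_all add: selection_mat_def)

lemma unit_cols_selection_mat:
  assumes "\<forall>l<R. h l < n"
  shows "unit_cols (selection_mat n R h)"
  using assms by (auto simp: unit_cols_iff selection_mat_def)

definition diag_core :: "nat \<Rightarrow> nat \<Rightarrow> (nat \<Rightarrow> nat) \<Rightarrow> core" where
  "diag_core R n h = (R, n, R, \<lambda>a i b. if a < R \<and> i < n \<and> b < R \<and> a = b \<and> i = h b then 1 else 0)"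

lemma core_L_core_lmult:
  assumes "G = (a, n, b, f)"
  shows "core_L (core_lmult T G) =
    mat (dim_row T * n) b (\<lambda>(r, l). (T * core_slice G (r mod n)) $$ (r div n, l))"
  using assms by simp

lemma core_R_core_rmult:
  assumes "G = (a, n, b, f)"
  shows "core_R (core_rmult G S) =
    mat a (n * dim_col S) (\<lambda>(x, c). (core_slice G (c div dim_col S) * S) $$ (x, c mod dim_col S))"
  using assms by simp

lemma core_slice_diag_core:
  "core_slice (diag_core R n h) i = mat_diag R (\<lambda>b. if i < n \<and> i = h b then 1 else 0)"
  unfolding diag_core_def core_slice.simps mat_diag_def by (rule eq_matI) auto

lemma core_L_lmult_diag_core:
  assumes "dim_col T = R"
  shows "core_L (core_lmult T (diag_core R n h)) = khatri_rao T (selection_mat n R h)"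
proof -
  have T: "T \<in> carrier_mat (dim_row T) R"
    using assms by (intro carrier_matI) simp_all
  have "khatri_rao T (selection_mat n R h) $$ (r, l) =
      (T * core_slice (diag_core R n h) (r mod n)) $$ (r div n, l)"
    if "r < dim_row T * n" "l < R" for r l
  proof -
    have "0 < n"
      using that(1) by (cases n) simp_all
    moreover have "r div n < dim_row T"
      using that(1) by (rule less_mult_imp_div_less)
    ultimately show ?thesis
      using that assms by (simp add: khatri_rao_def selection_mat_def core_slice_diag_core
          mat_diag_mult_right[OF T])
  qed
  then show ?thesis
    unfolding core_L_core_lmult[OF diag_core_def]
    using assms by (intro eq_matI) (auto simp: khatri_rao_def selection_mat_def)
qed

lemma transpose_core_R_rmult_diag_core:
  assumes "dim_col T = R"
  shows "transpose_mat (core_R (core_rmult (diag_core R n h) (transpose_mat T))) =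
    khatri_rao (selection_mat n R h) T"
proof -
  have T: "transpose_mat T \<in> carrier_mat R (dim_row T)"
    using assms by (intro carrier_matI) simp_all
  have "khatri_rao (selection_mat n R h) T $$ (c, x) =
      (core_slice (diag_core R n h) (c div dim_row T) * transpose_mat T) $$ (x, c mod dim_row T)"
    if "c < n * dim_row T" "x < R" for c x
  proof -
    have "0 < dim_row T"
      using that(1) by (cases "dim_row T") simp_all
    moreover have "c div dim_row T < n"
      using that(1) by (rule less_mult_imp_div_less)
    ultimately show ?thesis
      using that assms by (simp add: khatri_rao_def selection_mat_def core_slice_diag_core
          mat_diag_mult_left[OF T])
  qed
  then show ?thesis
    unfolding core_R_core_rmult[OF diag_core_def]
    using assms by (intro eq_matI) (auto simp: khatri_rao_def selection_mat_def)
qed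

section \<open>The two sweeps\<close>

lemma core_L_core_of_L: "dim_row N = a * n \<Longrightarrow> core_L (core_of_L a n N) = N"
  by (rule eq_matI) (auto simp: core_of_L_def)

lemma transpose_core_R_core_of_R:
  "dim_row N = n * b \<Longrightarrow> transpose_mat (core_R (core_of_R n b (transpose_mat N))) = N"
  by (rule eq_matI) (auto simp: core_of_R_def)

lemma left_step_eq:
  assumes "Gs ! k = (a, n, b, f)"
  shows "left_step k Gs = Gs[k := core_of_L a n (fst (depar (core_L (Gs ! k)))),
    Suc k := core_lmult (snd (depar (core_L (Gs ! k)))) (Gs ! Suc k)]"
  using assms by (simp add: left_step_def split: prod.split)

lemma length_left_step [simp]: "length (left_step k Gs) = length Gs"
  by (cases "Gs ! k") (simp add: left_step_eq)

lemma left_step_nth_other: "j \<noteq> k \<Longrightarrow> j \<noteq> Suc k \<Longrightarrow> left_step k Gs ! j = Gs ! j"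
  by (cases "Gs ! k") (simp add: left_step_eq)

lemma left_step_nth:
  assumes "Suc k < length Gs"
  shows "core_L (left_step k Gs ! k) = fst (depar (core_L (Gs ! k)))"
    and "left_step k Gs ! Suc k = core_lmult (snd (depar (core_L (Gs ! k)))) (Gs ! Suc k)"
proof -
  obtain a n b f where G: "Gs ! k = (a, n, b, f)"
    by (cases "Gs ! k")
  have "dim_row (fst (depar (core_L (Gs ! k)))) = a * n"
    by (simp add: G dim_row_fst_depar)
  then show "core_L (left_step k Gs ! k) = fst (depar (core_L (Gs ! k)))"
    using assms by (simp add: left_step_eq[OF G] core_L_core_of_L)
  show "left_step k Gs ! Suc k = core_lmult (snd (depar (core_L (Gs ! k)))) (Gs ! Suc k)"
    using assms by (simp add: left_step_eq[OF G])
qed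

lemma right_step_eq:
  assumes "Gs ! k = (a, n, b, f)"
  shows "right_step k Gs =
    Gs[k := core_of_R n b (transpose_mat (fst (depar (transpose_mat (core_R (Gs ! k)))))),
       k - 1 := core_rmult (Gs ! (k - 1))
         (transpose_mat (snd (depar (transpose_mat (core_R (Gs ! k))))))]"
  using assms by (simp add: right_step_def split: prod.split)

lemma length_right_step [simp]: "length (right_step k Gs) = length Gs"
  by (cases "Gs ! k") (simp add: right_step_eq)

lemma right_step_nth_other: "j \<noteq> k \<Longrightarrow> j \<noteq> k - 1 \<Longrightarrow> right_step k Gs ! j = Gs ! j"
  by (cases "Gs ! k") (simp add: right_step_eq)

lemma right_step_nth:
  assumes "0 < k" "k < length Gs"
  shows "transpose_mat (core_R (right_step k Gs ! k)) =
      fst (depar (transpose_mat (core_R (Gs ! k))))"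
    and "right_step k Gs ! (k - 1) =
      core_rmult (Gs ! (k - 1)) (transpose_mat (snd (depar (transpose_mat (core_R (Gs ! k))))))"
proof -
  obtain a n b f where G: "Gs ! k = (a, n, b, f)"
    by (cases "Gs ! k")
  have "dim_row (fst (depar (transpose_mat (core_R (Gs ! k))))) = n * b"
    by (simp add: G dim_row_fst_depar)
  then show "transpose_mat (core_R (right_step k Gs ! k)) =
      fst (depar (transpose_mat (core_R (Gs ! k))))"
    using assms by (simp add: right_step_eq[OF G] transpose_core_R_core_of_R)
  show "right_step k Gs ! (k - 1) =
      core_rmult (Gs ! (k - 1)) (transpose_mat (snd (depar (transpose_mat (core_R (Gs ! k))))))"
    using assms by (simp add: right_step_eq[OF G])
qed

lemma length_fold_left_step [simp]: "length (fold left_step ks Gs) = length Gs"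
  by (induction ks arbitrary: Gs) simp_all

lemma nth_fold_left_step_above:
  "\<forall>k\<in>set ks. Suc k < j \<Longrightarrow> fold left_step ks Gs ! j = Gs ! j"
  by (induction ks arbitrary: Gs) (simp_all add: left_step_nth_other)

lemma length_foldr_right_step [simp]: "length (foldr right_step ks Gs) = length Gs"
  by (induction ks) simp_all

lemma nth_foldr_right_step_below:
  "\<forall>k\<in>set ks. Suc j < k \<Longrightarrow> foldr right_step ks Gs ! j = Gs ! j"
proof (induction ks)
  case (Cons k ks)
  then have "j \<noteq> k" "j \<noteq> k - 1"
    by auto
  then show ?case
    using Cons by (simp add: right_step_nth_other)
qed simp

lemma left_sweep_orthonormal:
  assumes "p < length Gs"
    and first: "0 < p \<Longrightarrow> unit_cols (core_L (Gs ! 0)) \<and> dim_col (core_L (Gs ! 0)) = R"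
    and diag: "\<And>k. 0 < k \<Longrightarrow> k < p \<Longrightarrow> \<exists>n h. Gs ! k = diag_core R n h \<and> (\<forall>b<R. h b < n)"
    and "m \<le> p"
  shows "(\<forall>k<m. orthonormal_cols (core_L (fold left_step [0..<m] Gs ! k))) \<and>
    (m < p \<longrightarrow> unit_cols (core_L (fold left_step [0..<m] Gs ! m)) \<and>
      dim_col (core_L (fold left_step [0..<m] Gs ! m)) = R)"
  using \<open>m \<le> p\<close>
proof (induction m)
  case 0
  then show ?case
    using first by simp
next
  case (Suc m)
  let ?Gs = "fold left_step [0..<m] Gs"
  have m: "Suc m < length ?Gs"
    using Suc.prems assms(1) by simp
  have unit: "unit_cols (core_L (?Gs ! m))" and rank: "dim_col (core_L (?Gs ! m)) = R"
    using Suc by auto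
  have "orthonormal_cols (core_L (left_step m ?Gs ! k))" if "k < Suc m" for k
  proof (cases "k = m")
    case True
    then show ?thesis
      using left_step_nth(1)[OF m] depar_unit_cols(1)[OF unit] by simp
  next
    case False
    then show ?thesis
      using that Suc left_step_nth_other[of k m ?Gs] by simp
  qed
  moreover have "unit_cols (core_L (left_step m ?Gs ! Suc m)) \<and>
      dim_col (core_L (left_step m ?Gs ! Suc m)) = R" if sm: "Suc m < p"
  proof -
    obtain n h where "Gs ! Suc m = diag_core R n h" "\<forall>b<R. h b < n"
      using diag[of "Suc m"] sm by auto
    moreover have "?Gs ! Suc m = Gs ! Suc m"
      by (simp add: nth_fold_left_step_above)
    moreover have "unit_cols (snd (depar (core_L (?Gs ! m))))"
      "dim_col (snd (depar (core_L (?Gs ! m)))) = R"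
      using depar_unit_cols(2)[OF unit] rank by (simp_all add: dim_col_snd_depar)
    ultimately show ?thesis
      using left_step_nth(2)[OF m]
      by (simp add: core_L_lmult_diag_core unit_cols_khatri_rao unit_cols_selection_mat)
  qed
  ultimately show ?case
    by auto
qed

text \<open>\<open>foldr right_step [m..<d]\<close> performs the steps \<open>d - 1, \<dots>, m\<close> in this order, as
  \<open>sparse_tt\<close> does (\<open>foldr_conv_fold\<close>).\<close>

lemma right_sweep_orthonormal:
  assumes "p < length Gs"
    and last: "\<And>k. p < k \<Longrightarrow> Suc k = length Gs \<Longrightarrow>
      unit_cols (transpose_mat (core_R (Gs ! k))) \<and> dim_col (transpose_mat (core_R (Gs ! k))) = R"
    and diag: "\<And>k. p < k \<Longrightarrow> Suc k < length Gs \<Longrightarrow>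
      \<exists>n h. Gs ! k = diag_core R n h \<and> (\<forall>b<R. h b < n)"
    and "p < m" "m \<le> length Gs"
  shows "(\<forall>k. m \<le> k \<and> k < length Gs \<longrightarrow>
      orthonormal_cols (transpose_mat (core_R (foldr right_step [m..<length Gs] Gs ! k)))) \<and>
    (p < m - 1 \<longrightarrow>
      unit_cols (transpose_mat (core_R (foldr right_step [m..<length Gs] Gs ! (m - 1)))) \<and>
      dim_col (transpose_mat (core_R (foldr right_step [m..<length Gs] Gs ! (m - 1)))) = R)"
  using \<open>m \<le> length Gs\<close> \<open>p < m\<close>
proof (induction m rule: inc_induct)
  case base
  then show ?case
    using last[of "length Gs - 1"] by auto
next
  case (step m)
  let ?Gs = "foldr right_step [Suc m..<length Gs] Gs"
  have fold: "foldr right_step [m..<length Gs] Gs = right_step m ?Gs"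
    using step.hyps(2) by (simp add: upt_conv_Cons)
  have m: "0 < m" "m < length ?Gs"
    using step by simp_all
  have unit: "unit_cols (transpose_mat (core_R (?Gs ! m)))"
    and rank: "dim_col (transpose_mat (core_R (?Gs ! m))) = R"
    using step by auto
  have "orthonormal_cols (transpose_mat (core_R (right_step m ?Gs ! k)))"
    if "m \<le> k" "k < length Gs" for k
  proof (cases "k = m")
    case True
    then show ?thesis
      using right_step_nth(1)[OF m] depar_unit_cols(1)[OF unit] by simp
  next
    case False
    then show ?thesis
      using that step right_step_nth_other[of k m ?Gs] by simp
  qed
  moreover have "unit_cols (transpose_mat (core_R (right_step m ?Gs ! (m - 1)))) \<and>
      dim_col (transpose_mat (core_R (right_step m ?Gs ! (m - 1)))) = R" if pm: "p < m - 1"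
  proof -
    have "Suc (m - 1) < length Gs"
      using pm step.hyps(2) by linarith
    then obtain n h where "Gs ! (m - 1) = diag_core R n h" "\<forall>b<R. h b < n"
      using diag[of "m - 1"] pm by blast
    moreover have "?Gs ! (m - 1) = Gs ! (m - 1)"
      using m(1) by (simp add: nth_foldr_right_step_below)
    moreover have "unit_cols (snd (depar (transpose_mat (core_R (?Gs ! m)))))"
      "dim_col (snd (depar (transpose_mat (core_R (?Gs ! m))))) = R"
      using depar_unit_cols(2)[OF unit] rank by (simp_all add: dim_col_snd_depar)
    ultimately show ?thesis
      using right_step_nth(2)[OF m]
      by (simp add: transpose_core_R_rmult_diag_core unit_cols_khatri_rao unit_cols_selection_mat)
  qed
  ultimately show ?case
    unfolding fold by auto
qed

section \<open>The initial cores\<close>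

lemma nonzero_fiber_enum_index_less:
  assumes "nonzero_fiber_enum ns A p fs" "j < length fs" "k < length ns" "k \<noteq> p"
  shows "fs ! j ! k < ns ! k"
  using assms nth_mem[of j fs] unfolding nonzero_fiber_enum_def by auto

lemma init_core_interior_diag_core:
  assumes "nonzero_fiber_enum ns A p fs" "0 < k" "Suc k < length ns" "k \<noteq> p"
  shows "\<exists>n h. init_core ns A p fs k = diag_core (length fs) n h \<and> (\<forall>b<length fs. h b < n)"
proof -
  have "init_core ns A p fs k = diag_core (length fs) (ns ! k) (\<lambda>b. fs ! b ! k)"
    using assms(2-4) by (auto simp: init_core_def diag_core_def Let_def fun_eq_iff)
  moreover have "\<forall>b<length fs. fs ! b ! k < ns ! k"
    using nonzero_fiber_enum_index_less[OF assms(1)] assms(3,4) by simp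
  ultimately show ?thesis
    by blast
qed

lemma unit_cols_core_L_init_core_first:
  assumes "nonzero_fiber_enum ns A p fs" "2 \<le> length ns" "0 < p"
  shows "unit_cols (core_L (init_core ns A p fs 0)) \<and>
    dim_col (core_L (init_core ns A p fs 0)) = length fs"
proof -
  have "core_L (init_core ns A p fs 0) = selection_mat (ns ! 0) (length fs) (\<lambda>b. fs ! b ! 0)"
    using assms(2,3) by (intro eq_matI) (auto simp: init_core_def Let_def selection_mat_def)
  moreover have "\<forall>b<length fs. fs ! b ! 0 < ns ! 0"
    by (intro allI impI nonzero_fiber_enum_index_less[OF assms(1)]) (use assms(2,3) in linarith)+
  ultimately show ?thesis
    by (simp add: unit_cols_selection_mat)
qed

lemma unit_cols_core_R_init_core_last:
  assumes "nonzero_fiber_enum ns A p fs" "Suc k = length ns" "p < k"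
  shows "unit_cols (transpose_mat (core_R (init_core ns A p fs k))) \<and>
    dim_col (transpose_mat (core_R (init_core ns A p fs k))) = length fs"
proof -
  have "transpose_mat (core_R (init_core ns A p fs k)) =
      selection_mat (ns ! k) (length fs) (\<lambda>a. fs ! a ! k)"
    using assms(2,3) by (intro eq_matI) (auto simp: init_core_def Let_def selection_mat_def)
  moreover have "\<forall>a<length fs. fs ! a ! k < ns ! k"
    using nonzero_fiber_enum_index_less[OF assms(1)] assms(2,3) by simp
  ultimately show ?thesis
    by (simp add: unit_cols_selection_mat)
qed

theorem corollary2:
  fixes ns :: "nat list" and A :: "nat list \<Rightarrow> real" and p :: nat and fs :: "nat list list"
  assumes "length ns \<ge> 2" and "p < length ns" and "nonzero_fiber_enum ns A p fs"
  shows "(\<forall>k<p. orthonormal_cols (core_L (sparse_tt ns A p fs ! k))) \<and>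
         (\<forall>k. p < k \<and> k < length ns \<longrightarrow>
              orthonormal_cols (transpose_mat (core_R (sparse_tt ns A p fs ! k))))"
proof -
  have "ns \<noteq> []"
    using assms(1) by auto
  define G0 where "G0 = map (init_core ns A p fs) [0..<length ns]"
  define Lf where "Lf = fold left_step [0..<p] G0"
  have G0: "length G0 = length ns" "\<And>k. k < length ns \<Longrightarrow> G0 ! k = init_core ns A p fs k"
    by (simp_all add: G0_def)
  have Lf: "length Lf = length ns" "\<And>j. p < j \<Longrightarrow> Lf ! j = G0 ! j"
    unfolding Lf_def using G0(1) by (auto intro: nth_fold_left_step_above)
  have "\<forall>k<p. orthonormal_cols (core_L (Lf ! k))"
    unfolding Lf_def by (rule left_sweep_orthonormal[where R = "length fs", THEN conjunct1])
      (use assms \<open>ns \<noteq> []\<close> G0 unit_cols_core_L_init_core_first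
        init_core_interior_diag_core in auto)
  moreover have "\<forall>k. Suc p \<le> k \<and> k < length ns \<longrightarrow>
      orthonormal_cols (transpose_mat (core_R (foldr right_step [Suc p..<length ns] Lf ! k)))"
    unfolding Lf(1)[symmetric]
    by (rule right_sweep_orthonormal[where R = "length fs", THEN conjunct1])
      (use assms G0 Lf unit_cols_core_R_init_core_last init_core_interior_diag_core in auto)
  moreover have "sparse_tt ns A p fs = foldr right_step [Suc p..<length ns] Lf"
    by (simp add: sparse_tt_def Lf_def G0_def foldr_conv_fold)
  ultimately show ?thesis
    by (simp add: nth_foldr_right_step_below)
qed

end
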